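(* Let $R$ and $Q_R$ be as in the context. Then for every $q\in Q_R$ and every $\alpha\in(0,1)$, $$\zeta(q,\alpha)+e^{-i\pi q}\,\zeta(q,1-\alpha)\neq0 .$$
   Context: $\mathbb{H}_\mathbb{R}$ denotes the real quaternions $a+v_1e_1+v_2e_2+v_3e_3$ with $e_1^2=e_2^2=e_3^2=-1$, $e_1e_2=e_3$, $e_2e_3=e_1$, $e_3e_1=e_2$; $\mathbb{H}_\mathbb{C}$ the complex quaternions (complex coefficients, $i$ commuting with every $e_j$). For $q=a+v$, $v=\sum v_je_j$, $|v|=(\sum v_j^2)^{1/2}$. Quaternionic power: for $z\in\mathbb{C}\setminus\{0\}$, $p=b+u\in\mathbb{H}_\mathbb{R}$, $u\ne0$: $z^p:=z^b[\cos(|u|\log z)+\frac{u}{|u|}\sin(|u|\log z)]$ (principal $\log$, $z^b=e^{b\log z}$). Quaternionic Hurwitz zeta: $\zeta(q,a):=\sum_{k\ge0}(a+k)^{-q}$ for $a>0$, $\mathrm{Sc}\,q>1$; classical Hurwitz zeta: $\zeta(s,a)=\sum_{k\ge0}(a+k)^{-s}$. Exponentials $e^{q}:=\sum_j q^j/j!$ in $\mathbb{H}_\mathbb{C}$; for complex $w$, $e^{-i\pi w}$ is the usual complex exponential. Standing assumption: $R\subset\{w\in\mathbb{C}:\mathrm{Re}\,w>1\}$ is a set with $\overline R=R$ such that for every $w\in R$ and every $\alpha\in(0,1)$, $\zeta(w,\alpha)+e^{-i\pi w}\zeta(w,1-\alpha)\neq0$ (such nonempty regions, e.g. small rectangles or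 annular sectors around even integers $2n$, were constructed in earlier work). Define $Q_R:=\{q=a+v\in\mathbb{H}_\mathbb{R}: v\ne0,\ a+i|v|\in R\}$. *)

theory Defs
  imports "HOL-Analysis.Analysis"
begin

text \<open>Real quaternions a + v1 e1 + v2 e2 + v3 e3 as 4-tuples of reals (a, v1, v2, v3);
complex quaternions likewise as 4-tuples of complex numbers (scalar, e1, e2, e3 coefficients).
The product type carries the (Banach) normed vector space structure, used for infinite sums.\<close>

type_synonym rquat = "real \<times> real \<times> real \<times> real"
type_synonym cquat = "complex \<times> complex \<times> complex \<times> complex"

definition cq_of_rq :: "rquat \<Rightarrow> cquat" where
  "cq_of_rq q = (case q of (a, v1, v2, v3) \<Rightarrow>
      (complex_of_real a, complex_of_real v1, complex_of_real v2, complex_of_real v3))"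

text \<open>Hamilton product with e1 e2 = e3, e2 e3 = e1, e3 e1 = e2, ej^2 = -1; i commutes.\<close>
definition cq_mult :: "cquat \<Rightarrow> cquat \<Rightarrow> cquat" where
  "cq_mult x y = (case x of (a0, a1, a2, a3) \<Rightarrow> case y of (b0, b1, b2, b3) \<Rightarrow>
     (a0*b0 - a1*b1 - a2*b2 - a3*b3,
      a0*b1 + a1*b0 + a2*b3 - a3*b2,
      a0*b2 - a1*b3 + a2*b0 + a3*b1,
      a0*b3 + a1*b2 - a2*b1 + a3*b0))"

definition cq_one :: cquat where "cq_one = (1, 0, 0, 0)"

definition cq_scale :: "complex \<Rightarrow> cquat \<Rightarrow> cquat" where
  "cq_scale c x = (case x of (x0, x1, x2, x3) \<Rightarrow> (c*x0, c*x1, c*x2, c*x3))"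

definition cq_power :: "cquat \<Rightarrow> nat \<Rightarrow> cquat" where
  "cq_power x n = (cq_mult x ^^ n) cq_one"

definition cq_exp :: "cquat \<Rightarrow> cquat" where
  "cq_exp x = (\<Sum>j. cq_scale (1 / of_nat (fact j)) (cq_power x j))"

definition vnorm :: "real \<Rightarrow> real \<Rightarrow> real \<Rightarrow> real" where
  "vnorm v1 v2 v3 = sqrt (v1^2 + v2^2 + v3^2)"

text \<open>Quaternionic power z^p for z in C\<setminus>{0}, p = b + u in H_R, u \<noteq> 0:
  z^p = z^b [cos(|u| log z) + u/|u| sin(|u| log z)] (principal log, z^b = e^{b log z}).
  (For u = 0 we set z^p = z^b; this case is not used.)\<close>
definition qpow :: "complex \<Rightarrow> rquat \<Rightarrow> cquat" where
  "qpow z p = (case p of (b, u1, u2, u3) \<Rightarrow>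
     (let n = vnorm u1 u2 u3; zb = exp (complex_of_real b * Ln z) in
      if n = 0 then (zb, 0, 0, 0) else
      (zb * cos (complex_of_real n * Ln z),
       zb * complex_of_real (u1 / n) * sin (complex_of_real n * Ln z),
       zb * complex_of_real (u2 / n) * sin (complex_of_real n * Ln z),
       zb * complex_of_real (u3 / n) * sin (complex_of_real n * Ln z))))"

definition rq_neg :: "rquat \<Rightarrow> rquat" where
  "rq_neg q = (case q of (a, v1, v2, v3) \<Rightarrow> (-a, -v1, -v2, -v3))"

definition qhurwitz :: "rquat \<Rightarrow> real \<Rightarrow> cquat" where
  "qhurwitz q \<alpha> = (\<Sum>k. qpow (complex_of_real (\<alpha> + real k)) (rq_neg q))"

definition hurwitz :: "complex \<Rightarrow> real \<Rightarrow> complex" where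
  "hurwitz s \<alpha> = (\<Sum>k. complex_of_real (\<alpha> + real k) powr (- s))"

definition QR :: "complex set \<Rightarrow> rquat set" where
  "QR R = {(a, v1, v2, v3). (v1, v2, v3) \<noteq> (0, 0, 0) \<and>
             Complex a (vnorm v1 v2 v3) \<in> R}"

end

theory Submission imports Defs begin

text \<open>
  For a unit vector u in R^3 we have u^2 = -1, so the complex quaternions x + y u form a
  commutative algebra, which the orthogonal idempotents (1 -/+ i u)/2 identify with C x C under
  componentwise operations. Take q = a + v, u = v/|v| and w = a + i|v|. Then t^(-q) for t > 0
  corresponds to the pair (t^(-w), t^(-cnj w)) and q to (w, cnj w), hence zeta(q, alpha) to
  (zeta(w, alpha), zeta(cnj w, alpha)) and exp(-i pi q) to (exp(-i pi w), exp(-i pi cnj w)).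
  The quaternionic expression is thus the pair of the classical expressions at w and at cnj w,
  and it vanishes only if the classical one vanishes at w, which lies in R.
\<close>

lemma sums_Pair:
  assumes "f sums a" "g sums b"
  shows "(\<lambda>k. (f k, g k)) sums (a, b)"
proof -
  have "(\<Sum>k<n. (f k, g k)) = (\<Sum>k<n. f k, \<Sum>k<n. g k)" for n
    by (rule prod_eqI) (simp_all add: fst_sum snd_sum)
  then show ?thesis using assms unfolding sums_def by (simp add: tendsto_Pair)
qed

definition cq_axis :: "real \<Rightarrow> real \<Rightarrow> real \<Rightarrow> complex \<Rightarrow> complex \<Rightarrow> cquat" where
  "cq_axis u1 u2 u3 x y = (x, y * of_real u1, y * of_real u2, y * of_real u3)"

lemma cq_axis_mult:
  assumes "u1\<^sup>2 + u2\<^sup>2 + u3\<^sup>2 = 1"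
  shows "cq_mult (cq_axis u1 u2 u3 x y) (cq_axis u1 u2 u3 x' y') =
           cq_axis u1 u2 u3 (x * x' - y * y') (x * y' + y * x')"
proof -
  have u: "complex_of_real u1 * of_real u1 + of_real u2 * of_real u2 + of_real u3 * of_real u3 = 1"
    using arg_cong[OF assms, of complex_of_real] by (simp add: power2_eq_square)
  show ?thesis
    unfolding cq_mult_def cq_axis_def prod.case
    apply (simp only: prod.inject)
    apply (intro conjI)
     apply (use u in algebra)
    by algebra+
qed

text \<open>cq_diag u P M = P (1 - i u)/2 + M (1 + i u)/2\<close>
definition cq_diag :: "real \<Rightarrow> real \<Rightarrow> real \<Rightarrow> complex \<Rightarrow> complex \<Rightarrow> cquat" where
  "cq_diag u1 u2 u3 P M = cq_axis u1 u2 u3 ((P + M) / 2) ((P - M) * (- \<i> / 2))"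

lemma cq_diag_mult:
  assumes "u1\<^sup>2 + u2\<^sup>2 + u3\<^sup>2 = 1"
  shows "cq_mult (cq_diag u1 u2 u3 P M) (cq_diag u1 u2 u3 P' M') = cq_diag u1 u2 u3 (P * P') (M * M')"
proof -
  have e: "(P + M) / 2 * ((P' + M') / 2) - (P - M) * (- \<i> / 2) * ((P' - M') * (- \<i> / 2)) =
             (P * P' + M * M') / 2"
          "(P + M) / 2 * ((P' - M') * (- \<i> / 2)) + (P - M) * (- \<i> / 2) * ((P' + M') / 2) =
             (P * P' - M * M') * (- \<i> / 2)"
    by (simp_all add: field_simps)
  show ?thesis unfolding cq_diag_def cq_axis_mult[OF assms] e ..
qed

lemma cq_diag_add: "cq_diag u1 u2 u3 P M + cq_diag u1 u2 u3 P' M' = cq_diag u1 u2 u3 (P + P') (M + M')"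
  by (simp add: cq_diag_def cq_axis_def field_simps)

lemma cq_diag_scale: "cq_scale c (cq_diag u1 u2 u3 P M) = cq_diag u1 u2 u3 (c * P) (c * M)"
  by (simp add: cq_scale_def cq_diag_def cq_axis_def field_simps)

lemma cq_one_eq_cq_diag: "cq_one = cq_diag u1 u2 u3 1 1"
  by (simp add: cq_one_def cq_diag_def cq_axis_def)

lemma cq_power_cq_diag:
  assumes "u1\<^sup>2 + u2\<^sup>2 + u3\<^sup>2 = 1"
  shows "cq_power (cq_diag u1 u2 u3 P M) j = cq_diag u1 u2 u3 (P ^ j) (M ^ j)"
  by (induction j) (simp_all add: cq_power_def cq_diag_mult[OF assms] flip: cq_one_eq_cq_diag)

lemma sums_cq_diag:
  assumes "f sums P" "g sums M"
  shows "(\<lambda>k. cq_diag u1 u2 u3 (f k) (g k)) sums cq_diag u1 u2 u3 P M"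
  unfolding cq_diag_def cq_axis_def
  using assms by (intro sums_Pair sums_divide sums_mult2 sums_add sums_diff)

lemma cq_diag_eq_0_iff:
  assumes "u1\<^sup>2 + u2\<^sup>2 + u3\<^sup>2 = 1"
  shows "cq_diag u1 u2 u3 P M = 0 \<longleftrightarrow> P = 0 \<and> M = 0"
proof -
  have "(u1, u2, u3) \<noteq> (0, 0, 0)" using assms by auto
  then have "cq_diag u1 u2 u3 P M = 0 \<longleftrightarrow> P + M = 0 \<and> P - M = 0"
    by (auto simp: cq_diag_def cq_axis_def zero_prod_def)
  also have "\<dots> \<longleftrightarrow> P = 0 \<and> M = 0"
    by (auto simp: algebra_simps)
  finally show ?thesis .
qed

lemma cq_exp_cq_diag:
  assumes "u1\<^sup>2 + u2\<^sup>2 + u3\<^sup>2 = 1"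
  shows "cq_exp (cq_diag u1 u2 u3 P M) = cq_diag u1 u2 u3 (exp P) (exp M)"
proof -
  have exp_sums: "(\<lambda>j. 1 / of_nat (fact j) * z ^ j) sums exp z" for z :: complex
    using exp_converges[of z] by (simp add: scaleR_conv_of_real divide_inverse)
  have "(\<lambda>j. cq_scale (1 / of_nat (fact j)) (cq_power (cq_diag u1 u2 u3 P M) j)) sums
          cq_diag u1 u2 u3 (exp P) (exp M)"
    unfolding cq_power_cq_diag[OF assms] cq_diag_scale by (intro sums_cq_diag exp_sums)
  then show ?thesis unfolding cq_exp_def by (rule sums_unique[symmetric])
qed

lemma hurwitz_sums:
  assumes "1 < Re s" "0 < \<alpha>"
  shows "(\<lambda>k. complex_of_real (\<alpha> + real k) powr (- s)) sums hurwitz s \<alpha>"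
proof -
  have "summable (\<lambda>k. complex_of_real (\<alpha> + real k) powr (- s))"
  proof (rule summable_comparison_test'[where g = "\<lambda>k. real k powr (- Re s)" and N = 1])
    show "summable (\<lambda>k. real k powr (- Re s))"
      using summable_real_powr_iff[of "- Re s"] assms by simp
  next
    fix k :: nat assume "1 \<le> k"
    then show "norm (complex_of_real (\<alpha> + real k) powr (- s)) \<le> real k powr (- Re s)"
      using assms by (subst norm_powr_real_powr) (auto intro: powr_mono2')
  qed
  then show ?thesis unfolding hurwitz_def by (rule summable_sums)
qed

lemma vnorm_eq_0_iff: "vnorm v1 v2 v3 = 0 \<longleftrightarrow> (v1, v2, v3) = (0, 0, 0)"
  by (simp add: vnorm_def add_nonneg_eq_0_iff)

lemma vnorm_normalize:
  assumes "vnorm v1 v2 v3 \<noteq> 0"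
  defines "n \<equiv> vnorm v1 v2 v3"
  shows "(v1 / n)\<^sup>2 + (v2 / n)\<^sup>2 + (v3 / n)\<^sup>2 = 1"
proof -
  have "v1\<^sup>2 + v2\<^sup>2 + v3\<^sup>2 = n\<^sup>2" unfolding n_def vnorm_def by simp
  moreover have "n \<noteq> 0" using assms by simp
  ultimately show ?thesis by (simp add: power_divide add_divide_distrib[symmetric])
qed

lemma qpow_rq_neg_eq_cq_diag:
  fixes a v1 v2 v3 t :: real
  assumes t: "0 < t" and n: "vnorm v1 v2 v3 \<noteq> 0"
  defines "n \<equiv> vnorm v1 v2 v3"
  defines "w \<equiv> Complex a n"
  shows "qpow (of_real t) (rq_neg (a, v1, v2, v3)) =
           cq_diag (v1 / n) (v2 / n) (v3 / n) (of_real t powr (- w)) (of_real t powr (- cnj w))"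
proof -
  define L where "L = Ln (complex_of_real t)"
  define z where "z = exp (complex_of_real (- a) * L)"
  define E where "E = exp (\<i> * (of_real n * L))"
  define E' where "E' = exp (- (\<i> * (of_real n * L)))"
  have "vnorm (- v1) (- v2) (- v3) = n" unfolding n_def vnorm_def by simp
  then have qpow: "qpow (of_real t) (rq_neg (a, v1, v2, v3)) =
     (z * cos (of_real n * L), z * of_real (- v1 / n) * sin (of_real n * L),
      z * of_real (- v2 / n) * sin (of_real n * L), z * of_real (- v3 / n) * sin (of_real n * L))"
    using n by (simp add: qpow_def rq_neg_def Let_def n_def L_def z_def)
  have tz: "complex_of_real t \<noteq> 0" using t by simp
  have powr: "of_real t powr (- w) = z * E'" "of_real t powr (- cnj w) = z * E"
    unfolding powr_def z_def E_def E'_def L_def w_def complex_cnj Complex_eq using tz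
    by (simp_all add: exp_add[symmetric] algebra_simps)
  have trig: "cos (of_real n * L) = (E + E') / 2" "sin (of_real n * L) = (E - E') * (- \<i> / 2)"
    unfolding E_def E'_def cos_exp_eq sin_exp_eq by (simp_all add: field_simps)
  show ?thesis
    unfolding qpow powr trig cq_diag_def cq_axis_def using n by (simp add: n_def field_simps)
qed

lemma qhurwitz_eq_cq_diag:
  fixes a v1 v2 v3 \<beta> :: real
  assumes "1 < a" "vnorm v1 v2 v3 \<noteq> 0" "0 < \<beta>"
  defines "n \<equiv> vnorm v1 v2 v3"
  defines "w \<equiv> Complex a n"
  shows "qhurwitz (a, v1, v2, v3) \<beta> =
           cq_diag (v1 / n) (v2 / n) (v3 / n) (hurwitz w \<beta>) (hurwitz (cnj w) \<beta>)"
proof -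
  have "qpow (of_real (\<beta> + real k)) (rq_neg (a, v1, v2, v3)) =
          cq_diag (v1 / n) (v2 / n) (v3 / n)
            (of_real (\<beta> + real k) powr (- w)) (of_real (\<beta> + real k) powr (- cnj w))" for k
    unfolding n_def w_def using assms by (intro qpow_rq_neg_eq_cq_diag) simp_all
  moreover have "1 < Re w" "1 < Re (cnj w)" using assms by simp_all
  ultimately have "(\<lambda>k. qpow (of_real (\<beta> + real k)) (rq_neg (a, v1, v2, v3))) sums
          cq_diag (v1 / n) (v2 / n) (v3 / n) (hurwitz w \<beta>) (hurwitz (cnj w) \<beta>)"
    using assms by (simp only:) (intro sums_cq_diag hurwitz_sums)
  then show ?thesis unfolding qhurwitz_def by (rule sums_unique[symmetric])
qed

lemma cq_of_rq_eq_cq_diag: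
  assumes "n \<noteq> 0"
  shows "cq_of_rq (a, v1, v2, v3) = cq_diag (v1 / n) (v2 / n) (v3 / n) (Complex a n) (cnj (Complex a n))"
  using assms by (simp add: cq_of_rq_def cq_diag_def cq_axis_def Complex_eq field_simps)

theorem proposition3:
  fixes R :: "complex set" and q :: rquat and \<alpha> :: real
  assumes R_half: "R \<subseteq> {w. Re w > 1}"
    and R_conj: "cnj ` R = R"
    and R_nonvan: "\<And>w \<beta>. w \<in> R \<Longrightarrow> 0 < \<beta> \<Longrightarrow> \<beta> < 1 \<Longrightarrow>
                      hurwitz w \<beta> + exp (- \<i> * of_real pi * w) * hurwitz w (1 - \<beta>) \<noteq> 0"
    and q: "q \<in> QR R"
    and \<alpha>: "0 < \<alpha>" "\<alpha> < 1"
  shows "qhurwitz q \<alpha> +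
           cq_mult (cq_exp (cq_scale (- \<i> * of_real pi) (cq_of_rq q))) (qhurwitz q (1 - \<alpha>)) \<noteq> 0"
proof -
  obtain a v1 v2 v3 where q_eq: "q = (a, v1, v2, v3)" by (cases q) auto
  define n where "n = vnorm v1 v2 v3"
  define w where "w = Complex a n"
  define c where "c = - \<i> * complex_of_real pi"
  let ?diag = "cq_diag (v1 / n) (v2 / n) (v3 / n)"
  have w: "w \<in> R" and n: "n \<noteq> 0"
    using q vnorm_eq_0_iff unfolding q_eq QR_def n_def w_def by auto
  have unit: "(v1 / n)\<^sup>2 + (v2 / n)\<^sup>2 + (v3 / n)\<^sup>2 = 1"
    using vnorm_normalize n unfolding n_def by blast
  have "1 < a" using w R_half unfolding w_def by auto
  then have "qhurwitz q \<beta> = ?diag (hurwitz w \<beta>) (hurwitz (cnj w) \<beta>)" if "0 < \<beta>" for \<beta>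
    using qhurwitz_eq_cq_diag n that unfolding q_eq n_def w_def by blast
  moreover have "cq_exp (cq_scale c (cq_of_rq q)) = ?diag (exp (c * w)) (exp (c * cnj w))"
    unfolding q_eq cq_of_rq_eq_cq_diag[OF n] cq_diag_scale cq_exp_cq_diag[OF unit] w_def ..
  ultimately have "qhurwitz q \<alpha> + cq_mult (cq_exp (cq_scale c (cq_of_rq q))) (qhurwitz q (1 - \<alpha>)) =
      ?diag (hurwitz w \<alpha> + exp (c * w) * hurwitz w (1 - \<alpha>))
            (hurwitz (cnj w) \<alpha> + exp (c * cnj w) * hurwitz (cnj w) (1 - \<alpha>))"
    using \<alpha> by (simp add: cq_diag_mult[OF unit] cq_diag_add)
  then show ?thesis
    using R_nonvan[OF w \<alpha>] by (simp add: cq_diag_eq_0_iff[OF unit] c_def)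
qed

end
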